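(* Let $N\ge1$ and $n\ge N$ be integers and let $P(t_1,\dots,t_n)$ be a symmetric polynomial with complex coefficients such that $P(x,\dots,x,t_1,\dots,t_{n-N-1})=0$ identically, where $x$ is repeated $N+1$ times. Then the polynomial $P(x,\dots,x,t_1,\dots,t_{n-N})$ (with $x$ repeated $N$ times) is divisible by $\prod_{j=1}^{n-N}(t_j-x)^2$. *)

theory Defs
  imports Complex_Main "HOL-Library.Poly_Mapping" "HOL-Combinatorics.Permutations"
begin

text \<open>Multiplication is the convolution product from Poly_Mapping, so this type
  is the commutative ring of complex polynomials and dvd is polynomial divisibility.\<close>

type_synonym mpoly = "(nat \<Rightarrow>\<^sub>0 nat) \<Rightarrow>\<^sub>0 complex"

definition Var :: "nat \<Rightarrow> mpoly" where
  "Var i = Poly_Mapping.single (Poly_Mapping.single i 1) 1"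

definition Const :: "complex \<Rightarrow> mpoly" where
  "Const c = Poly_Mapping.single 0 c"

definition subst :: "(nat \<Rightarrow> mpoly) \<Rightarrow> mpoly \<Rightarrow> mpoly" where
  "subst s p = (\<Sum>m\<in>Poly_Mapping.keys p.
      Const (Poly_Mapping.lookup p m) * (\<Prod>i\<in>Poly_Mapping.keys m. s i ^ Poly_Mapping.lookup m i))"

text \<open>p only involves the variables 0,...,n-1 (playing the role of t_1..t_n).\<close>
definition vars_below :: "nat \<Rightarrow> mpoly \<Rightarrow> bool" where
  "vars_below n p \<longleftrightarrow> (\<forall>m\<in>Poly_Mapping.keys p. Poly_Mapping.keys m \<subseteq> {..<n})"

definition symmetric_poly :: "nat \<Rightarrow> mpoly \<Rightarrow> bool" where
  "symmetric_poly n p \<longleftrightarrow>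
     (\<forall>\<pi>. \<pi> permutes {..<n} \<longrightarrow> subst (\<lambda>i. Var (\<pi> i)) p = p)"

text \<open>The specialization P(x,...,x,t_1,...,t_{n-k}) with x repeated k times:
  in the result, x is variable 0 and t_j is variable j.  Original variable i<k
  goes to x, variable i\<ge>k goes to t_{i-k+1}.\<close>
definition specialize :: "nat \<Rightarrow> mpoly \<Rightarrow> mpoly" where
  "specialize k p = subst (\<lambda>i. if i < k then Var 0 else Var (i - k + 1)) p"

end

theory Submission imports Defs begin

text \<open>Put \<open>U = P(x,\<dots>,x, x + t\<^sub>N\<^sub>+\<^sub>1, \<dots>, x + t\<^sub>n)\<close>; the claim is that every monomial of
  \<open>U\<close> contains each \<open>t\<^sub>k\<close> at least squared, i.e. that \<open>U\<close> and \<open>\<partial>U/\<partial>t\<^sub>k\<close> vanish at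
  \<open>t\<^sub>k = 0\<close>.  The first holds because \<open>U|\<^bsub>t\<^sub>k=0\<^esub>\<close> is, up to a permutation, the
  specialisation with \<open>N + 1\<close> copies of \<open>x\<close>.  For the second, \<open>\<partial>U/\<partial>t\<^sub>k\<close> is \<open>\<partial>\<^sub>kP\<close> at the
  shifted point.  Differentiating the vanishing specialisation with \<open>N + 1\<close> copies of
  \<open>x\<close> in \<open>x\<close> and in the remaining variables shows that \<open>\<sum>\<^sub>l \<partial>\<^sub>lP\<close> over the \<open>N + 1\<close>
  coordinates equal to \<open>x\<close> vanishes there; by symmetry these \<open>N + 1\<close> summands agree, so
  each of them vanishes in characteristic zero.\<close>

section \<open>Substitution\<close>

lemma Const_0 [simp]: "Const 0 = 0"
  by (simp add: Const_def)

lemma Const_1 [simp]: "Const 1 = 1"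
  by (simp add: Const_def)

lemma Const_add: "Const (a + b) = Const a + Const b"
  by (simp add: Const_def single_add)

lemma Const_mult: "Const a * Const b = Const (a * b)"
  by (simp add: Const_def mult_single)

lemma Const_mult_single: "Const c * Poly_Mapping.single m d = Poly_Mapping.single m (c * d)"
  by (simp add: Const_def mult_single)

lemma poly_mapping_sum_singles:
  "(p :: 'a \<Rightarrow>\<^sub>0 'b::comm_monoid_add) =
     (\<Sum>m\<in>Poly_Mapping.keys p. Poly_Mapping.single m (Poly_Mapping.lookup p m))"
proof (rule poly_mapping_eqI)
  fix k
  have "(\<Sum>m\<in>Poly_Mapping.keys p. Poly_Mapping.lookup (Poly_Mapping.single m (Poly_Mapping.lookup p m)) k)
     = (\<Sum>m\<in>Poly_Mapping.keys p. if m = k then Poly_Mapping.lookup p m else 0)"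
    by (intro sum.cong) (auto simp: lookup_single)
  also have "\<dots> = Poly_Mapping.lookup p k"
    by (auto simp: sum.delta in_keys_iff)
  finally show "Poly_Mapping.lookup p k =
      Poly_Mapping.lookup (\<Sum>m\<in>Poly_Mapping.keys p. Poly_Mapping.single m (Poly_Mapping.lookup p m)) k"
    by (simp add: lookup_sum)
qed

definition monom_eval :: "(nat \<Rightarrow> mpoly) \<Rightarrow> (nat \<Rightarrow>\<^sub>0 nat) \<Rightarrow> mpoly" where
  "monom_eval s m = (\<Prod>i\<in>Poly_Mapping.keys m. s i ^ Poly_Mapping.lookup m i)"

lemma monom_eval_eq_prod_superset:
  assumes "finite A" "Poly_Mapping.keys m \<subseteq> A"
  shows "monom_eval s m = (\<Prod>i\<in>A. s i ^ Poly_Mapping.lookup m i)"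
  unfolding monom_eval_def
  by (rule prod.mono_neutral_left) (use assms in \<open>auto simp: in_keys_iff\<close>)

lemma monom_eval_add: "monom_eval s (a + b) = monom_eval s a * monom_eval s b"
proof -
  let ?A = "Poly_Mapping.keys a \<union> Poly_Mapping.keys b"
  have "monom_eval s (a + b) = (\<Prod>i\<in>?A. s i ^ Poly_Mapping.lookup (a + b) i)"
    by (rule monom_eval_eq_prod_superset) (auto simp: keys_add)
  also have "\<dots> = (\<Prod>i\<in>?A. s i ^ Poly_Mapping.lookup a i) * (\<Prod>i\<in>?A. s i ^ Poly_Mapping.lookup b i)"
    by (simp add: lookup_add power_add prod.distrib)
  also have "\<dots> = monom_eval s a * monom_eval s b"
    by (subst (1 2) monom_eval_eq_prod_superset[symmetric]) auto
  finally show ?thesis .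
qed

lemma subst_eq_sum_superset:
  assumes "finite A" "Poly_Mapping.keys p \<subseteq> A"
  shows "subst s p = (\<Sum>m\<in>A. Const (Poly_Mapping.lookup p m) * monom_eval s m)"
  unfolding subst_def monom_eval_def[symmetric]
  by (rule sum.mono_neutral_left) (use assms in \<open>auto simp: in_keys_iff\<close>)

lemma subst_0 [simp]: "subst s 0 = 0"
  by (simp add: subst_def)

lemma subst_add: "subst s (p + q) = subst s p + subst s q"
proof -
  let ?A = "Poly_Mapping.keys p \<union> Poly_Mapping.keys q"
  have "subst s (p + q) = (\<Sum>m\<in>?A. Const (Poly_Mapping.lookup (p + q) m) * monom_eval s m)"
    by (rule subst_eq_sum_superset) (auto simp: keys_add)
  also have "\<dots> = (\<Sum>m\<in>?A. Const (Poly_Mapping.lookup p m) * monom_eval s m)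
      + (\<Sum>m\<in>?A. Const (Poly_Mapping.lookup q m) * monom_eval s m)"
    by (simp add: lookup_add Const_add distrib_right sum.distrib)
  also have "\<dots> = subst s p + subst s q"
    by (subst (1 2) subst_eq_sum_superset[symmetric]) auto
  finally show ?thesis .
qed

lemma subst_sum: "subst s (sum f A) = (\<Sum>a\<in>A. subst s (f a))"
  by (induction A rule: infinite_finite_induct) (auto simp: subst_add)

lemma subst_single: "subst s (Poly_Mapping.single m c) = Const c * monom_eval s m"
  by (cases "c = 0") (simp_all add: subst_def monom_eval_def)

lemma subst_mult: "subst s (p * q) = subst s p * subst s q"
proof -
  let ?sp = "\<lambda>a. Poly_Mapping.single a (Poly_Mapping.lookup p a)"
  let ?sq = "\<lambda>b. Poly_Mapping.single b (Poly_Mapping.lookup q b)"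
  have single_mult: "subst s (?sp a * ?sq b) = subst s (?sp a) * subst s (?sq b)" for a b
    by (simp add: mult_single subst_single monom_eval_add flip: Const_mult)
  have "subst s (p * q) = subst s ((\<Sum>a\<in>Poly_Mapping.keys p. ?sp a) * (\<Sum>b\<in>Poly_Mapping.keys q. ?sq b))"
    by (simp flip: poly_mapping_sum_singles)
  also have "\<dots> = subst s (\<Sum>a\<in>Poly_Mapping.keys p. ?sp a) * subst s (\<Sum>b\<in>Poly_Mapping.keys q. ?sq b)"
    by (simp add: sum_product subst_sum single_mult)
  also have "\<dots> = subst s p * subst s q"
    by (simp flip: poly_mapping_sum_singles)
  finally show ?thesis .
qed

lemma subst_Const [simp]: "subst s (Const c) = Const c"
  by (simp add: Const_def subst_single monom_eval_def)

lemma subst_1 [simp]: "subst s 1 = 1"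
  using subst_Const[of s 1] by simp

lemma subst_Var [simp]: "subst s (Var i) = s i"
  by (simp add: Var_def subst_single monom_eval_def)

lemma subst_power: "subst s (p ^ k) = subst s p ^ k"
  by (induction k) (simp_all add: subst_mult)

lemma subst_prod: "subst s (prod f A) = (\<Prod>a\<in>A. subst s (f a))"
  by (induction A rule: infinite_finite_induct) (auto simp: subst_mult)

lemma subst_subst: "subst s (subst t p) = subst (\<lambda>i. subst s (t i)) p"
proof -
  have monom: "subst s (monom_eval t m) = monom_eval (\<lambda>i. subst s (t i)) m" for m
    by (simp add: monom_eval_def subst_prod subst_power)
  show ?thesis
    unfolding subst_def[of t] subst_def[of "\<lambda>i. subst s (t i)"] monom_eval_def[symmetric]
    by (simp add: subst_sum subst_mult monom)
qed

lemma Var_power: "Var i ^ e = Poly_Mapping.single (Poly_Mapping.single i e) 1"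
  by (induction e) (simp_all add: Var_def mult_single flip: single_add)

lemma prod_single_1:
  "(\<Prod>i\<in>A. Poly_Mapping.single (f i) (1::complex)) = Poly_Mapping.single (\<Sum>i\<in>A. f i) 1"
  by (induction A rule: infinite_finite_induct) (simp_all add: mult_single)

lemma monom_eval_Var: "monom_eval Var m = Poly_Mapping.single m 1"
  unfolding monom_eval_def Var_power prod_single_1 by (simp flip: poly_mapping_sum_singles)

lemma mpoly_induct [consumes 1, case_names Const Var add mult]:
  assumes vars: "vars_below K p"
    and Const: "\<And>c. Q (Const c)" and Var: "\<And>i. i < K \<Longrightarrow> Q (Var i)"
    and add: "\<And>p q. Q p \<Longrightarrow> Q q \<Longrightarrow> Q (p + q)"
    and mult: "\<And>p q. Q p \<Longrightarrow> Q q \<Longrightarrow> Q (p * q)"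
  shows "Q p"
proof -
  have sum: "(\<And>a. a \<in> S \<Longrightarrow> Q (f a)) \<Longrightarrow> Q (sum f S)" for f and S :: "'x set"
    by (induction S rule: infinite_finite_induct) (use Const[of 0] add in auto)
  have prod: "(\<And>a. a \<in> S \<Longrightarrow> Q (f a)) \<Longrightarrow> Q (prod f S)" for f and S :: "'x set"
    by (induction S rule: infinite_finite_induct) (use Const[of 1] mult in auto)
  have power: "Q x \<Longrightarrow> Q (x ^ e)" for x e
    by (induction e) (use Const[of 1] mult in auto)
  have monom: "Q (monom_eval Var m)" if "m \<in> Poly_Mapping.keys p" for m
    unfolding monom_eval_def
    by (intro prod power Var) (use vars that in \<open>auto simp: vars_below_def\<close>)
  have "p = (\<Sum>m\<in>Poly_Mapping.keys p. Const (Poly_Mapping.lookup p m) * monom_eval Var m)"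
    by (subst poly_mapping_sum_singles) (simp add: monom_eval_Var Const_mult_single)
  also have "Q \<dots>"
    by (intro sum mult Const monom)
  finally show ?thesis .
qed

section \<open>Partial derivatives\<close>

definition partial :: "nat \<Rightarrow> mpoly \<Rightarrow> mpoly" where
  "partial k p = Abs_poly_mapping (\<lambda>m. of_nat (Poly_Mapping.lookup m k + 1) *
      Poly_Mapping.lookup p (m + Poly_Mapping.single k 1))"

lemma lookup_partial:
  "Poly_Mapping.lookup (partial k p) m =
     of_nat (Poly_Mapping.lookup m k + 1) * Poly_Mapping.lookup p (m + Poly_Mapping.single k 1)"
proof -
  have "inj (\<lambda>m::nat \<Rightarrow>\<^sub>0 nat. m + Poly_Mapping.single k 1)"
    by (auto intro: injI)
  then have "finite ((\<lambda>m. m + Poly_Mapping.single k 1) -` Poly_Mapping.keys p)"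
    by (rule finite_vimageI[OF finite_keys])
  then have "finite {m. of_nat (Poly_Mapping.lookup m k + 1) *
      Poly_Mapping.lookup p (m + Poly_Mapping.single k 1) \<noteq> (0::complex)}"
    by (rule rev_finite_subset) (auto simp: in_keys_iff)
  then show ?thesis
    by (simp add: partial_def)
qed

lemma partial_add: "partial k (p + q) = partial k p + partial k q"
  by (rule poly_mapping_eqI) (simp add: lookup_partial lookup_add distrib_left)

lemma partial_0 [simp]: "partial k 0 = 0"
  by (rule poly_mapping_eqI) (simp add: lookup_partial)

lemma partial_sum: "partial k (sum f A) = (\<Sum>a\<in>A. partial k (f a))"
  by (induction A rule: infinite_finite_induct) (simp_all add: partial_add)

lemma partial_single:
  "partial k (Poly_Mapping.single m c) =
     (if Poly_Mapping.lookup m k = 0 then 0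
      else Poly_Mapping.single (m - Poly_Mapping.single k 1) (of_nat (Poly_Mapping.lookup m k) * c))"
proof (rule poly_mapping_eqI)
  fix m0
  show "Poly_Mapping.lookup (partial k (Poly_Mapping.single m c)) m0 =
    Poly_Mapping.lookup (if Poly_Mapping.lookup m k = 0 then 0
      else Poly_Mapping.single (m - Poly_Mapping.single k 1) (of_nat (Poly_Mapping.lookup m k) * c)) m0"
  proof (cases "m = m0 + Poly_Mapping.single k 1")
    case True
    then show ?thesis
      by (simp add: lookup_partial lookup_add)
  next
    case False
    have "m - Poly_Mapping.single k 1 \<noteq> m0" if "Poly_Mapping.lookup m k \<noteq> 0"
    proof
      assume "m - Poly_Mapping.single k 1 = m0"
      then have "m = m0 + Poly_Mapping.single k 1"
        by (intro poly_mapping_eqI)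
           (use that in \<open>auto simp: lookup_add lookup_minus lookup_single when_def\<close>)
      with False show False by simp
    qed
    with False show ?thesis
      by (auto simp: lookup_partial lookup_single when_def)
  qed
qed

lemma partial_Const [simp]: "partial k (Const c) = 0"
  by (simp add: Const_def partial_single)

lemma partial_Var: "partial k (Var j) = (if j = k then 1 else 0)"
  by (simp add: Var_def partial_single lookup_single when_def)

lemma partial_single_mult:
  "partial k (Poly_Mapping.single a c * Poly_Mapping.single b d) =
     partial k (Poly_Mapping.single a c) * Poly_Mapping.single b d
     + Poly_Mapping.single a c * partial k (Poly_Mapping.single b d)"
proof -
  let ?d = "Poly_Mapping.single k (Suc 0)"
  have "b + (a - ?d) = a + b - ?d" if "Poly_Mapping.lookup a k \<noteq> 0"
    by (rule poly_mapping_eqI) (use that in \<open>auto simp: lookup_add lookup_minus lookup_single when_def\<close>)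
  moreover have "a + (b - ?d) = a + b - ?d" if "Poly_Mapping.lookup b k \<noteq> 0"
    by (rule poly_mapping_eqI) (use that in \<open>auto simp: lookup_add lookup_minus lookup_single when_def\<close>)
  ultimately show ?thesis
    by (cases "Poly_Mapping.lookup a k = 0"; cases "Poly_Mapping.lookup b k = 0")
       (simp_all add: mult_single partial_single lookup_add single_add algebra_simps)
qed

lemma partial_mult: "partial k (p * q) = partial k p * q + p * partial k q"
proof -
  let ?sp = "\<lambda>a. Poly_Mapping.single a (Poly_Mapping.lookup p a)"
  let ?sq = "\<lambda>b. Poly_Mapping.single b (Poly_Mapping.lookup q b)"
  have "partial k ((\<Sum>a\<in>Poly_Mapping.keys p. ?sp a) * (\<Sum>b\<in>Poly_Mapping.keys q. ?sq b)) =
      partial k (\<Sum>a\<in>Poly_Mapping.keys p. ?sp a) * (\<Sum>b\<in>Poly_Mapping.keys q. ?sq b)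
      + (\<Sum>a\<in>Poly_Mapping.keys p. ?sp a) * partial k (\<Sum>b\<in>Poly_Mapping.keys q. ?sq b)"
    by (simp add: sum_product partial_sum partial_single_mult sum.distrib)
  then show ?thesis
    by (simp flip: poly_mapping_sum_singles)
qed

lemma partial_subst:
  assumes "vars_below K p"
  shows "partial i (subst s p) = (\<Sum>j<K. subst s (partial j p) * partial i (s j))"
  using assms
proof (induction rule: mpoly_induct)
  case (Const c)
  then show ?case by simp
next
  case (Var l)
  have "(\<Sum>j<K. subst s (partial j (Var l)) * partial i (s j)) = (\<Sum>j<K. if j = l then partial i (s j) else 0)"
    by (rule sum.cong) (auto simp: partial_Var)
  with Var show ?case by simp
next
  case (add p q)
  then show ?case
    by (simp add: subst_add partial_add distrib_right sum.distrib)
next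
  case (mult p q)
  then show ?case
    by (simp add: subst_mult partial_mult subst_add distrib_right sum.distrib sum_distrib_left sum_distrib_right algebra_simps)
qed

lemma partial_symmetric_poly:
  assumes vars: "vars_below n P" and sym: "symmetric_poly n P" and "j < n" "i < n"
  shows "partial j P = subst (\<lambda>l. Var (transpose j i l)) (partial i P)"
proof -
  have "transpose j i permutes {..<n}"
    using assms by (intro permutes_swap_id) auto
  with sym have "partial j P = partial j (subst (\<lambda>l. Var (transpose j i l)) P)"
    by (simp add: symmetric_poly_def)
  also have "\<dots> = (\<Sum>l<n. subst (\<lambda>l. Var (transpose j i l)) (partial l P) * partial j (Var (transpose j i l)))"
    by (rule partial_subst[OF vars])
  also have "\<dots> = (\<Sum>l<n. if l = i then subst (\<lambda>l. Var (transpose j i l)) (partial i P) else 0)"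
    by (rule sum.cong) (auto simp: partial_Var transpose_def)
  finally show ?thesis
    using \<open>i < n\<close> by simp
qed

section \<open>Divisibility by squares of variables\<close>

lemma subst_Var_zero_single:
  "subst (Var(k := 0)) (Poly_Mapping.single m c) =
     (if Poly_Mapping.lookup m k = 0 then Poly_Mapping.single m c else 0)"
proof (cases "Poly_Mapping.lookup m k = 0")
  case True
  then have "monom_eval (Var(k := 0)) m = monom_eval Var m"
    unfolding monom_eval_def by (intro prod.cong) (auto simp: in_keys_iff)
  with True show ?thesis
    by (simp add: subst_single monom_eval_Var Const_mult_single)
next
  case False
  then have "monom_eval (Var(k := 0)) m = 0"
    unfolding monom_eval_def by (intro prod_zero) (auto simp: in_keys_iff intro!: bexI[of _ k])
  with False show ?thesis
    by (simp add: subst_single)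
qed

lemma lookup_subst_Var_zero:
  assumes "Poly_Mapping.lookup m0 k = 0"
  shows "Poly_Mapping.lookup (subst (Var(k := 0)) p) m0 = Poly_Mapping.lookup p m0"
proof -
  have "Poly_Mapping.lookup (subst (Var(k := 0)) p) m0 =
     (\<Sum>m\<in>Poly_Mapping.keys p.
        Poly_Mapping.lookup (subst (Var(k := 0)) (Poly_Mapping.single m (Poly_Mapping.lookup p m))) m0)"
    by (subst poly_mapping_sum_singles) (simp add: subst_sum lookup_sum)
  also have "\<dots> = (\<Sum>m\<in>Poly_Mapping.keys p. if m = m0 then Poly_Mapping.lookup p m else 0)"
    by (rule sum.cong) (use assms in \<open>auto simp: subst_Var_zero_single lookup_single when_def\<close>)
  also have "\<dots> = Poly_Mapping.lookup p m0"
    by (auto simp: sum.delta in_keys_iff)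
  finally show ?thesis .
qed

lemma two_le_lookup_if_vanishes_with_partial:
  assumes "subst (Var(k := 0)) p = 0" "subst (Var(k := 0)) (partial k p) = 0"
    and "m \<in> Poly_Mapping.keys p"
  shows "2 \<le> Poly_Mapping.lookup m k"
proof (rule ccontr)
  assume "\<not> 2 \<le> Poly_Mapping.lookup m k"
  then consider "Poly_Mapping.lookup m k = 0" | "Poly_Mapping.lookup m k = 1"
    by linarith
  then have "Poly_Mapping.lookup p m = 0"
  proof cases
    case 1
    then show ?thesis
      using lookup_subst_Var_zero[OF 1, of p] assms(1) by simp
  next
    case 2
    define m0 where "m0 = m - Poly_Mapping.single k 1"
    have m0: "Poly_Mapping.lookup m0 k = 0"
      using 2 by (simp add: m0_def lookup_minus)
    have m: "m = m0 + Poly_Mapping.single k 1"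
      by (rule poly_mapping_eqI) (use 2 in \<open>auto simp: m0_def lookup_add lookup_minus lookup_single when_def\<close>)
    have "Poly_Mapping.lookup (partial k p) m0 = 0"
      using lookup_subst_Var_zero[OF m0, of "partial k p"] assms(2) by simp
    then show ?thesis
      by (simp add: lookup_partial m0 m)
  qed
  with assms(3) show False
    by (simp add: in_keys_iff)
qed

lemma prod_Var_square_dvd:
  assumes "finite K" and exps: "\<And>m k. m \<in> Poly_Mapping.keys p \<Longrightarrow> k \<in> K \<Longrightarrow> 2 \<le> Poly_Mapping.lookup m k"
  shows "(\<Prod>k\<in>K. Var k ^ 2) dvd p"
proof -
  define D where "D = (\<Sum>k\<in>K. Poly_Mapping.single k (2::nat))"
  have lookup_D: "Poly_Mapping.lookup D i = (if i \<in> K then 2 else 0)" for i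
    using \<open>finite K\<close> by (simp add: D_def lookup_sum lookup_single when_def)
  have D_add: "D + (m - D) = m" if "m \<in> Poly_Mapping.keys p" for m
    by (rule poly_mapping_eqI) (use exps[OF that] in \<open>auto simp: lookup_D lookup_add lookup_minus\<close>)
  have "p = (\<Sum>m\<in>Poly_Mapping.keys p. Poly_Mapping.single m (Poly_Mapping.lookup p m))"
    by (rule poly_mapping_sum_singles)
  also have "\<dots> = Poly_Mapping.single D 1 *
      (\<Sum>m\<in>Poly_Mapping.keys p. Poly_Mapping.single (m - D) (Poly_Mapping.lookup p m))"
    unfolding sum_distrib_left by (rule sum.cong) (auto simp: mult_single D_add)
  also have "Poly_Mapping.single D 1 = (\<Prod>k\<in>K. Var k ^ 2)"
    by (simp add: Var_power prod_single_1 D_def)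
  finally show ?thesis
    by (rule dvdI)
qed

section \<open>Shifting the free variables\<close>

text \<open>\<open>subst (shifted N) P = P(x,\<dots>,x, x + t\<^sub>N\<^sub>+\<^sub>1, \<dots>, x + t\<^sub>n)\<close> with \<open>x\<close> as variable 0:
  coordinate \<open>l \<ge> N\<close> of \<open>P\<close> becomes \<open>x + t\<^bsub>l+1\<^esub>\<close>.  Updating coordinate \<open>i\<close> to \<open>x\<close>
  amounts to setting \<open>t\<^bsub>i+1\<^esub> = 0\<close>.\<close>

definition shifted :: "nat \<Rightarrow> nat \<Rightarrow> mpoly" where
  "shifted N l = (if l < N then Var 0 else Var 0 + Var (Suc l))"

lemma subst_shifted_upd_eq_0:
  assumes vars: "vars_below n P" and sym: "symmetric_poly n P"
    and spec: "specialize (Suc N) P = 0" and i: "N \<le> i" "i < n"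
  shows "subst ((shifted N)(i := Var 0)) P = 0"
proof -
  have at_N: "subst ((shifted N)(N := Var 0)) P = 0"
  proof -
    define \<rho> where "\<rho> j = (if j = 0 then Var 0 else Var 0 + Var (j + N + 1))" for j
    have "(\<lambda>l. subst \<rho> (if l < Suc N then Var 0 else Var (l - Suc N + 1))) = (shifted N)(N := Var 0)"
      by (auto simp: \<rho>_def shifted_def)
    then have "subst \<rho> (specialize (Suc N) P) = subst ((shifted N)(N := Var 0)) P"
      unfolding specialize_def subst_subst by simp
    with spec show ?thesis
      by simp
  qed
  have "transpose i N permutes {..<n}"
    using i by (intro permutes_swap_id) auto
  with sym have "subst ((shifted N)(i := Var 0)) P =
      subst ((shifted N)(i := Var 0)) (subst (\<lambda>l. Var (transpose i N l)) P)"
    by (simp add: symmetric_poly_def)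
  also have "(\<lambda>l. ((shifted N)(i := Var 0)) (transpose i N l)) =
      (\<lambda>l. subst (\<lambda>j. Var (transpose (Suc i) (Suc N) j)) (((shifted N)(N := Var 0)) l))"
    using i by (auto simp: shifted_def transpose_def subst_add)
  then have "subst ((shifted N)(i := Var 0)) (subst (\<lambda>l. Var (transpose i N l)) P) =
      subst (\<lambda>j. Var (transpose (Suc i) (Suc N) j)) (subst ((shifted N)(N := Var 0)) P)"
    by (simp add: subst_subst)
  finally show ?thesis
    by (simp add: at_N)
qed

lemma subst_partial_shifted_upd_eq_0:
  assumes vars: "vars_below n P" and sym: "symmetric_poly n P"
    and spec: "specialize (Suc N) P = 0" and i: "N \<le> i" "i < n"
  shows "subst ((shifted N)(i := Var 0)) (partial i P) = 0"
proof -
  let ?\<nu> = "(shifted N)(i := Var 0)"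
  define S where "S = insert i {..<N}"
  have S: "S \<subseteq> {..<n}" "card S = Suc N"
    using i by (auto simp: S_def)
  have vanish: "subst ?\<nu> P = 0"
    by (rule subst_shifted_upd_eq_0[OF vars sym spec i])
  txt \<open>Differentiate \<open>subst ?\<nu> P = 0\<close> in \<open>x\<close>, and in \<open>t\<^bsub>l+1\<^esub>\<close> for \<open>l \<notin> S\<close>.\<close>
  have "partial 0 (subst ?\<nu> P) = (\<Sum>l<n. subst ?\<nu> (partial l P) * partial 0 (?\<nu> l))"
    by (rule partial_subst[OF vars])
  also have "\<dots> = (\<Sum>l<n. subst ?\<nu> (partial l P))"
    by (rule sum.cong) (auto simp: shifted_def partial_add partial_Var)
  finally have sum_0: "(\<Sum>l<n. subst ?\<nu> (partial l P)) = 0"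
    using vanish by simp
  have outside_S: "subst ?\<nu> (partial l P) = 0" if "l < n" "l \<notin> S" for l
  proof -
    have "partial (Suc l) (subst ?\<nu> P) = (\<Sum>l'<n. subst ?\<nu> (partial l' P) * partial (Suc l) (?\<nu> l'))"
      by (rule partial_subst[OF vars])
    also have "\<dots> = (\<Sum>l'<n. if l' = l then subst ?\<nu> (partial l P) else 0)"
      by (rule sum.cong) (use that in \<open>auto simp: shifted_def partial_add partial_Var S_def\<close>)
    finally show ?thesis
      using vanish that by simp
  qed
  have inside_S: "subst ?\<nu> (partial l P) = subst ?\<nu> (partial i P)" if "l \<in> S" for l
  proof -
    have "(\<lambda>j. ?\<nu> (transpose l i j)) = ?\<nu>"
      using that by (auto simp: shifted_def transpose_def S_def)
    with that S i show ?thesis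
      by (simp add: partial_symmetric_poly[OF vars sym, of l i] subst_subst subset_iff)
  qed
  have "0 = (\<Sum>l\<in>S. subst ?\<nu> (partial l P))"
    using sum_0 by (simp add: sum.mono_neutral_right[OF _ S(1)] outside_S)
  also have "\<dots> = of_nat (Suc N) * subst ?\<nu> (partial i P)"
    using S(2) by (simp add: inside_S)
  finally show ?thesis
    by (metis mult_eq_0_iff of_nat_eq_0_iff nat.distinct(1))
qed

lemma prod_square_dvd_subst_shifted:
  assumes vars: "vars_below n P" and sym: "symmetric_poly n P" and spec: "specialize (Suc N) P = 0"
  shows "(\<Prod>k\<in>{Suc N..n}. Var k ^ 2) dvd subst (shifted N) P"
proof (rule prod_Var_square_dvd)
  fix m k
  assume m: "m \<in> Poly_Mapping.keys (subst (shifted N) P)" and "k \<in> {Suc N..n}"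
  then obtain i where i: "N \<le> i" "i < n" and k: "k = Suc i"
    by (metis Suc_le_D atLeastAtMost_iff Suc_le_mono Suc_le_lessD)
  have set_zero: "(\<lambda>l. subst (Var(Suc i := 0)) (shifted N l)) = (shifted N)(i := Var 0)"
    using i by (auto simp: shifted_def subst_add)
  have "partial (Suc i) (subst (shifted N) P) =
      (\<Sum>l<n. subst (shifted N) (partial l P) * partial (Suc i) (shifted N l))"
    by (rule partial_subst[OF vars])
  also have "\<dots> = (\<Sum>l<n. if l = i then subst (shifted N) (partial i P) else 0)"
    by (rule sum.cong) (use i in \<open>auto simp: shifted_def partial_add partial_Var\<close>)
  finally have "partial (Suc i) (subst (shifted N) P) = subst (shifted N) (partial i P)"
    using i by simp
  then show "2 \<le> Poly_Mapping.lookup m k"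
    unfolding k
    by (intro two_le_lookup_if_vanishes_with_partial[OF _ _ m])
       (simp_all add: subst_subst set_zero subst_shifted_upd_eq_0[OF vars sym spec i]
         subst_partial_shifted_upd_eq_0[OF vars sym spec i])
qed simp

text \<open>Undo the shift by \<open>t\<^sub>k \<mapsto> t\<^bsub>k-N\<^esub> - x\<close>; the variables \<open>1, \<dots>, N\<close> do not occur
  in \<open>subst (shifted N) P\<close>, so their images are irrelevant.\<close>

lemma specialize_eq_subst_shifted:
  "specialize N P = subst (\<lambda>k. if k = 0 then Var 0 else Var (k - N) - Var 0) (subst (shifted N) P)"
proof -
  have "(\<lambda>l. subst (\<lambda>k. if k = 0 then Var 0 else Var (k - N) - Var 0) (shifted N l)) =
      (\<lambda>l. if l < N then Var 0 else Var (l - N + 1))"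
    by (auto simp: shifted_def subst_add Suc_diff_le)
  then show ?thesis
    by (simp add: specialize_def subst_subst)
qed

theorem proposition3:
  fixes N n :: nat and P :: mpoly
  assumes "N \<ge> 1" and "n \<ge> N"
    and "vars_below n P"
    and "symmetric_poly n P"
    and "N < n \<longrightarrow> specialize (N + 1) P = 0"
  shows "(\<Prod>j\<in>{1..n - N}. (Var j - Var 0) ^ 2) dvd specialize N P"
proof (cases "N < n")
  case False
  then show ?thesis by simp
next
  case True
  let ?unshift = "\<lambda>k. if k = 0 then Var 0 else Var (k - N) - Var 0"
  have "(\<Prod>k\<in>{Suc N..n}. Var k ^ 2) dvd subst (shifted N) P"
    using prod_square_dvd_subst_shifted assms(3,4,5) True by simp
  then have "subst ?unshift (\<Prod>k\<in>{Suc N..n}. Var k ^ 2) dvd specialize N P"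
    by (auto simp: specialize_eq_subst_shifted dvd_def subst_mult)
  also have "subst ?unshift (\<Prod>k\<in>{Suc N..n}. Var k ^ 2) = (\<Prod>k\<in>{Suc N..n}. (Var (k - N) - Var 0) ^ 2)"
    by (simp add: subst_prod subst_power)
  also have "\<dots> = (\<Prod>j\<in>{1..n - N}. (Var j - Var 0) ^ 2)"
    by (rule prod.reindex_bij_witness[of _ "\<lambda>j. j + N" "\<lambda>k. k - N"]) auto
  finally show ?thesis .
qed

end
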